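(* Let $N\ge2$ and let $P$ be a symmetric probability density on $\Lambda^N$. Then there is a sequence $(P_n)$ of symmetric probability densities on $\Lambda^N$ such that each $P_n$ satisfies the condition: there is a measurable set $A\subset\Lambda$ of positive measure such that for every $x_N\in A$ there is a constant $\gamma(x_N)>0$ with $P_n(\cdot,x_N)\ge\gamma(x_N)\rho_n^{(N-1)}$ a.e. on $\Lambda^{N-1}$ (where $\rho_n^{(N-1)}$ is the $(N-1)$-marginal of $P_n$); and $P_n\to P$ in $L^1(\Lambda^N;d^Nx)$. If in addition the measure $dx$ is finite and $P$ is essentially bounded, then the sequence can be chosen so that moreover $P_n\to P$ in $L^\infty(\Lambda^N;d^Nx)$.
   Context: $(\Lambda;dx)$ is a complete $\sigma$-finite measure space with non-zero measure $dx$; $d^kx$ denotes the completion of $dx^{\otimes k}$ on $\Lambda^k$. A symmetric probability density on $\Lambda^N$ is a nonnegative, measurable, symmetric function $P$ with $\int_{\Lambda^N}P\,d^Nx=1$; its $(N-1)$-marginal is $\rho^{(N-1)}(x_1,\dots,x_{N-1}):=\int_\Lambda P(x_1,\dots,x_N)\,dx_N$. *)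

theory Defs
  imports "HOL-Probability.Probability"
begin

text \<open>The completed product measure d^k x on Lambda^k.  Points of Lambda^k are
  extensional functions on the index set {..<k} (coordinates 0,...,k-1).\<close>
definition prodM :: "'a measure \<Rightarrow> nat \<Rightarrow> (nat \<Rightarrow> 'a) measure" where
  "prodM M k = completion (PiM {..<k} (\<lambda>_. M))"

definition sym_prob_density :: "'a measure \<Rightarrow> nat \<Rightarrow> ((nat \<Rightarrow> 'a) \<Rightarrow> real) \<Rightarrow> bool" where
  "sym_prob_density M N P \<longleftrightarrow>
     P \<in> borel_measurable (prodM M N) \<and>
     (\<forall>x\<in>space (prodM M N). 0 \<le> P x) \<and>
     (\<forall>\<sigma> x. \<sigma> permutes {..<N} \<longrightarrow> x \<in> space (prodM M N) \<longrightarrow> P (x \<circ> \<sigma>) = P x) \<and>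
     (\<integral>\<^sup>+ x. ennreal (P x) \<partial>prodM M N) = 1"

definition marginal :: "'a measure \<Rightarrow> nat \<Rightarrow> ((nat \<Rightarrow> 'a) \<Rightarrow> real) \<Rightarrow> (nat \<Rightarrow> 'a) \<Rightarrow> ennreal" where
  "marginal M N P y = (\<integral>\<^sup>+ t. ennreal (P (y(N - 1 := t))) \<partial>M)"

definition lower_bound_cond :: "'a measure \<Rightarrow> nat \<Rightarrow> ((nat \<Rightarrow> 'a) \<Rightarrow> real) \<Rightarrow> bool" where
  "lower_bound_cond M N P \<longleftrightarrow>
     (\<exists>A. A \<in> sets M \<and> emeasure M A > 0 \<and>
        (\<forall>xN\<in>A. \<exists>\<gamma>::real. \<gamma> > 0 \<and>
            (AE y in prodM M (N - 1). ennreal \<gamma> * marginal M N P y \<le> ennreal (P (y(N - 1 := xN))))))"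

end

theory Submission
  imports Defs
begin

text \<open>Truncate P at height K, restrict it to a cube B^N of finite positive measure, add the
  constant e on the cube and renormalise.  The result is a symmetric probability density lying
  between two positive constants on B^N and vanishing off it.  Hence its (N-1)-marginal is at most
  a constant times |B|, while for x_N in B the section at x_N is bounded below on B^(N-1), and both
  vanish outside B^(N-1): this is the lower-bound condition.  Letting B exhaust Lambda, K tend to
  infinity and e (1 + |B^N|) tend to 0, the approximants converge to P almost everywhere, hence
  in L^1 by Scheffe's lemma.  If |Lambda| is finite and P is bounded, take B = Lambda and
  K = ess sup P: then the approximant is (P + e) / (1 + e |Lambda|^N) almost everywhere, which is
  uniformly within O(e) of P.\<close>

definition cube :: "nat \<Rightarrow> 'a set \<Rightarrow> (nat \<Rightarrow> 'a) set" where
  "cube N B = PiE {..<N} (\<lambda>_. B)"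

lemma space_prodM: "space (prodM M N) = cube N (space M)"
  unfolding prodM_def cube_def by (simp add: space_PiM)

lemma sets_cube: "B \<in> sets M \<Longrightarrow> cube N B \<in> sets (prodM M N)"
  unfolding prodM_def cube_def by (intro sets_completionI_sets sets_PiM_I_finite) auto

lemma emeasure_cube:
  assumes "sigma_finite_measure M" "B \<in> sets M"
  shows "emeasure (prodM M N) (cube N B) = emeasure M B ^ N"
proof -
  interpret product_sigma_finite "\<lambda>_. M"
    using assms(1) by (simp add: product_sigma_finite_def)
  have "cube N B \<in> sets (PiM {..<N} (\<lambda>_. M))"
    unfolding cube_def by (intro sets_PiM_I_finite) (auto simp: assms)
  then show ?thesis
    unfolding prodM_def by (simp add: cube_def emeasure_PiM assms)
qed

lemma comp_permutes_in_cube_iff: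
  assumes "\<sigma> permutes {..<N}" "x \<in> extensional {..<N}"
  shows "x \<circ> \<sigma> \<in> cube N B \<longleftrightarrow> x \<in> cube N B"
proof -
  have "(\<forall>i\<in>{..<N}. x (\<sigma> i) \<in> B) \<longleftrightarrow> (\<forall>i\<in>\<sigma> ` {..<N}. x i \<in> B)"
    by simp
  then show ?thesis
    using assms unfolding cube_def
    by (auto simp: PiE_iff extensional_def permutes_not_in permutes_image)
qed

lemma fun_upd_last_in_cube_iff:
  assumes "0 < N" "y \<in> extensional {..<N - 1}"
  shows "y(N - 1 := t) \<in> cube N B \<longleftrightarrow> y \<in> cube (N - 1) B \<and> t \<in> B"
  using assms by (cases N) (auto simp: cube_def PiE_iff extensional_def)

lemma marginal_le_if_bounded_on_cube:
  assumes "B \<in> sets M" "0 < N" "y \<in> extensional {..<N - 1}"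
    and bounded: "\<And>x. x \<in> cube N B \<Longrightarrow> Q x \<le> b"
    and outside: "\<And>x. x \<notin> cube N B \<Longrightarrow> Q x = 0"
  shows "marginal M N Q y \<le> ennreal b * emeasure M B"
proof -
  have "ennreal (Q (y(N - 1 := t))) \<le> ennreal b * indicator B t" for t
  proof (cases "y(N - 1 := t) \<in> cube N B")
    case True
    then show ?thesis
      using bounded fun_upd_last_in_cube_iff[OF assms(2,3)] by (simp add: ennreal_leI)
  next
    case False
    then show ?thesis
      using outside by simp
  qed
  then have "marginal M N Q y \<le> (\<integral>\<^sup>+ t. ennreal b * indicator B t \<partial>M)"
    unfolding marginal_def by (rule nn_integral_mono)
  then show ?thesis
    using assms(1) by (simp add: nn_integral_cmult_indicator)
qed

lemma lower_bound_cond_if_bounds_on_cube: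
  assumes B: "B \<in> sets M" "0 < emeasure M B" "emeasure M B < \<infinity>"
    and "0 < N" "0 < a"
    and bounds: "\<And>x. x \<in> cube N B \<Longrightarrow> a \<le> Q x \<and> Q x \<le> b"
    and outside: "\<And>x. x \<notin> cube N B \<Longrightarrow> Q x = 0"
  shows "lower_bound_cond M N Q"
  unfolding lower_bound_cond_def
proof (intro exI[of _ B] conjI ballI B(1,2))
  fix xN assume xN: "xN \<in> B"
  define \<mu> where "\<mu> = measure M B"
  have \<mu>: "emeasure M B = ennreal \<mu>"
    using B(3) by (simp add: \<mu>_def emeasure_eq_ennreal_measure)
  have "0 < \<mu>"
    using B(2,3) by (simp add: \<mu>_def measure_def enn2real_positive_iff)
  have "(\<lambda>_\<in>{..<N}. xN) \<in> cube N B"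
    using xN unfolding cube_def by auto
  from bounds[OF this] have "0 < b"
    using \<open>0 < a\<close> by linarith
  define \<gamma> where "\<gamma> = a / (b * \<mu>)"
  have "0 < \<gamma>"
    unfolding \<gamma>_def using \<open>0 < a\<close> \<open>0 < b\<close> \<open>0 < \<mu>\<close> by simp
  show "\<exists>\<gamma>>0. AE y in prodM M (N - 1). ennreal \<gamma> * marginal M N Q y \<le> ennreal (Q (y(N - 1 := xN)))"
  proof (intro exI[of _ \<gamma>] conjI AE_I2 \<open>0 < \<gamma>\<close>)
    fix y assume "y \<in> space (prodM M (N - 1))"
    then have y: "y \<in> extensional {..<N - 1}"
      unfolding space_prodM cube_def by (simp add: PiE_def)
    show "ennreal \<gamma> * marginal M N Q y \<le> ennreal (Q (y(N - 1 := xN)))"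
    proof (cases "y \<in> cube (N - 1) B")
      case True
      have "ennreal \<gamma> * marginal M N Q y \<le> ennreal \<gamma> * (ennreal b * ennreal \<mu>)"
        using marginal_le_if_bounded_on_cube[where b = b, OF B(1) \<open>0 < N\<close> y _ outside] bounds \<mu>
        by (intro mult_left_mono) auto
      also have "\<dots> = ennreal a"
        using \<open>0 < \<gamma>\<close> \<open>0 < b\<close> \<open>0 < \<mu>\<close> by (simp add: \<gamma>_def ennreal_mult[symmetric])
      also have "\<dots> \<le> ennreal (Q (y(N - 1 := xN)))"
        using bounds fun_upd_last_in_cube_iff[OF \<open>0 < N\<close> y] True xN by (simp add: ennreal_leI)
      finally show ?thesis .
    next
      case False
      then have "marginal M N Q y = 0"
        unfolding marginal_def using outside fun_upd_last_in_cube_iff[OF \<open>0 < N\<close> y] by simp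
      then show ?thesis
        by simp
    qed
  qed
qed

lemma integrable_sym_prob_density:
  "sym_prob_density M N P \<Longrightarrow> integrable (prodM M N) P"
  unfolding sym_prob_density_def by (intro integrableI_nonneg) auto

lemma integral_sym_prob_density:
  "sym_prob_density M N P \<Longrightarrow> integral\<^sup>L (prodM M N) P = 1"
  unfolding sym_prob_density_def by (subst integral_eq_nn_integral) auto

definition normalized :: "'b measure \<Rightarrow> ('b \<Rightarrow> real) \<Rightarrow> 'b \<Rightarrow> real" where
  "normalized M f x = f x / integral\<^sup>L M f"

lemma sym_prob_density_normalized:
  assumes f: "integrable (prodM M N) f" "0 < integral\<^sup>L (prodM M N) f"
    and nonneg: "\<And>x. x \<in> space (prodM M N) \<Longrightarrow> 0 \<le> f x"
    and sym: "\<And>\<sigma> x. \<sigma> permutes {..<N} \<Longrightarrow> x \<in> space (prodM M N) \<Longrightarrow> f (x \<circ> \<sigma>) = f x"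
  shows "sym_prob_density M N (normalized (prodM M N) f)"
  unfolding sym_prob_density_def normalized_def
proof (intro conjI allI impI ballI)
  show "(\<lambda>x. f x / integral\<^sup>L (prodM M N) f) \<in> borel_measurable (prodM M N)"
    using f by (intro borel_measurable_divide) auto
  show "(\<integral>\<^sup>+ x. ennreal (f x / integral\<^sup>L (prodM M N) f) \<partial>prodM M N) = 1"
    using f nonneg by (subst nn_integral_eq_integral) auto
qed (use f nonneg sym in auto)

lemma sym_prob_density_L1_tendsto:
  assumes Q: "\<And>k. sym_prob_density M N (Q k)" and P: "sym_prob_density M N P"
    and lim: "AE x in prodM M N. (\<lambda>k. Q k x) \<longlonglongrightarrow> P x"
  shows "(\<lambda>k. \<integral>\<^sup>+ x. ennreal \<bar>Q k x - P x\<bar> \<partial>prodM M N) \<longlonglongrightarrow> 0"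
proof -
  have norm_integral: "(\<integral>\<^sup>+ x. ennreal (norm (R x)) \<partial>prodM M N) = 1"
    if "sym_prob_density M N R" for R
    using that unfolding sym_prob_density_def
    by (metis (no_types, lifting) nn_integral_cong real_norm_def abs_of_nonneg)
  have "(\<lambda>k. \<integral>\<^sup>+ x. norm (Q k x - P x) \<partial>prodM M N) \<longlonglongrightarrow> 0"
    using Q P lim norm_integral[OF Q] norm_integral[OF P]
    by (intro Scheffe_lemma2 integrable_sym_prob_density) (auto simp: sym_prob_density_def)
  then show ?thesis
    by simp
qed

definition truncation :: "nat \<Rightarrow> ((nat \<Rightarrow> 'a) \<Rightarrow> real) \<Rightarrow> 'a set \<Rightarrow> real \<Rightarrow> (nat \<Rightarrow> 'a) \<Rightarrow> real" where
  "truncation N P B K x = max 0 (min (P x) K) * indicator (cube N B) x"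

definition lifted_truncation ::
    "nat \<Rightarrow> ((nat \<Rightarrow> 'a) \<Rightarrow> real) \<Rightarrow> 'a set \<Rightarrow> real \<Rightarrow> real \<Rightarrow> (nat \<Rightarrow> 'a) \<Rightarrow> real" where
  "lifted_truncation N P B K e x = truncation N P B K x + e * indicator (cube N B) x"

definition regularization ::
    "'a measure \<Rightarrow> nat \<Rightarrow> ((nat \<Rightarrow> 'a) \<Rightarrow> real) \<Rightarrow> 'a set \<Rightarrow> real \<Rightarrow> real \<Rightarrow> (nat \<Rightarrow> 'a) \<Rightarrow> real" where
  "regularization M N P B K e = normalized (prodM M N) (lifted_truncation N P B K e)"

lemma truncation_nonneg: "0 \<le> truncation N P B K x"
  unfolding truncation_def by simp

lemma truncation_le: "0 \<le> P x \<Longrightarrow> truncation N P B K x \<le> P x"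
  unfolding truncation_def by (simp add: indicator_def)

lemma truncation_le_height: "0 \<le> K \<Longrightarrow> truncation N P B K x \<le> K"
  unfolding truncation_def by (simp add: indicator_def)

lemma measurable_truncation:
  assumes "P \<in> borel_measurable (prodM M N)" "B \<in> sets M"
  shows "truncation N P B K \<in> borel_measurable (prodM M N)"
  unfolding truncation_def using assms sets_cube[OF assms(2)]
  by (intro borel_measurable_times borel_measurable_max borel_measurable_min
      borel_measurable_const borel_measurable_indicator) auto

lemma truncation_tendsto:
  assumes B: "incseq B" "(\<Union>k. B k) = space M" and K: "filterlim K at_top sequentially"
    and x: "x \<in> space (prodM M N)"
  shows "(\<lambda>k. truncation N P (B k) (K k) x) \<longlonglongrightarrow> max 0 (P x)"
proof (rule tendsto_eventually)
  have "\<forall>\<^sub>F k in sequentially. x i \<in> B k" if "i \<in> {..<N}" for i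
  proof -
    have "x i \<in> space M"
      using x that by (auto simp: space_prodM cube_def)
    then obtain j where "x i \<in> B j"
      using B(2) by auto
    then show ?thesis
      using B(1) unfolding eventually_sequentially incseq_def by blast
  qed
  then have "\<forall>\<^sub>F k in sequentially. \<forall>i\<in>{..<N}. x i \<in> B k"
    by (intro eventually_ball_finite) auto
  moreover have "\<forall>\<^sub>F k in sequentially. P x \<le> K k"
    using K by (simp add: filterlim_at_top)
  ultimately show "\<forall>\<^sub>F k in sequentially. truncation N P (B k) (K k) x = max 0 (P x)"
  proof eventually_elim
    case (elim k)
    then have "x \<in> cube N (B k)"
      using x by (auto simp: space_prodM cube_def PiE_iff)
    with elim show ?case
      by (simp add: truncation_def)
  qed
qed

locale cube_regularization =
  fixes M :: "'a measure" and N :: nat and P :: "(nat \<Rightarrow> 'a) \<Rightarrow> real"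
    and B :: "'a set" and K e :: real
  assumes sigma_finite: "sigma_finite_measure M" and density: "sym_prob_density M N P"
    and B: "B \<in> sets M" "0 < emeasure M B" "emeasure M B < \<infinity>"
    and K: "0 \<le> K" and e: "0 < e"
begin

lemma measurable_density: "P \<in> borel_measurable (prodM M N)"
  using density unfolding sym_prob_density_def by simp

lemma emeasure_cube_less_top: "emeasure (prodM M N) (cube N B) < \<infinity>"
  using B(3) by (simp add: emeasure_cube[OF sigma_finite B(1)] power_less_top_ennreal)

lemma measure_cube_pos: "0 < measure (prodM M N) (cube N B)"
proof -
  have "emeasure (prodM M N) (cube N B) \<noteq> 0"
    using B(2) by (simp add: emeasure_cube[OF sigma_finite B(1)])
  then show ?thesis
    using emeasure_cube_less_top unfolding measure_def
    by (metis enn2real_positive_iff infinity_ennreal_def zero_less_iff_neq_zero)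
qed

lemma integrable_truncation: "integrable (prodM M N) (truncation N P B K)"
proof (rule Bochner_Integration.integrable_bound)
  show "integrable (prodM M N) (\<lambda>x. K * indicator (cube N B) x)"
    using sets_cube[OF B(1)] emeasure_cube_less_top by simp
  show "AE x in prodM M N. norm (truncation N P B K x) \<le> norm (K * indicator (cube N B) x)"
    using K by (intro AE_I2) (simp add: truncation_def indicator_def)
qed (rule measurable_truncation[OF measurable_density B(1)])

lemma integrable_lifted_truncation: "integrable (prodM M N) (lifted_truncation N P B K e)"
  unfolding lifted_truncation_def
  using integrable_truncation sets_cube[OF B(1)] emeasure_cube_less_top by simp

lemma integral_lifted_truncation:
  "integral\<^sup>L (prodM M N) (lifted_truncation N P B K e)
     = integral\<^sup>L (prodM M N) (truncation N P B K) + e * measure (prodM M N) (cube N B)"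
  unfolding lifted_truncation_def
  using integrable_truncation sets_cube[OF B(1)] emeasure_cube_less_top by simp

lemma integral_lifted_truncation_pos: "0 < integral\<^sup>L (prodM M N) (lifted_truncation N P B K e)"
proof -
  have "0 \<le> integral\<^sup>L (prodM M N) (truncation N P B K)"
    by (simp add: truncation_nonneg)
  then show ?thesis
    unfolding integral_lifted_truncation using e measure_cube_pos by (intro add_nonneg_pos) simp_all
qed

lemma sym_prob_density_regularization: "sym_prob_density M N (regularization M N P B K e)"
  unfolding regularization_def
proof (rule sym_prob_density_normalized[OF integrable_lifted_truncation integral_lifted_truncation_pos])
  show "0 \<le> lifted_truncation N P B K e x" for x
    using e by (simp add: lifted_truncation_def truncation_nonneg)
  fix \<sigma> x assume \<sigma>: "\<sigma> permutes {..<N}" and x: "x \<in> space (prodM M N)"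
  then have "P (x \<circ> \<sigma>) = P x"
    using density unfolding sym_prob_density_def by blast
  moreover have "x \<circ> \<sigma> \<in> cube N B \<longleftrightarrow> x \<in> cube N B"
    using x by (intro comp_permutes_in_cube_iff \<sigma>) (simp add: space_prodM cube_def PiE_def)
  ultimately show "lifted_truncation N P B K e (x \<circ> \<sigma>) = lifted_truncation N P B K e x"
    by (simp add: lifted_truncation_def truncation_def indicator_def)
qed

lemma lower_bound_cond_regularization:
  assumes "0 < N"
  shows "lower_bound_cond M N (regularization M N P B K e)"
proof (rule lower_bound_cond_if_bounds_on_cube[OF B \<open>0 < N\<close>])
  let ?I = "integral\<^sup>L (prodM M N) (lifted_truncation N P B K e)"
  show "0 < e / ?I"
    using e integral_lifted_truncation_pos by simp
  show "e / ?I \<le> regularization M N P B K e x \<and> regularization M N P B K e x \<le> (K + e) / ?I"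
    if "x \<in> cube N B" for x
    using that integral_lifted_truncation_pos truncation_nonneg[of N P B K x]
      truncation_le_height[OF K, of N P B x]
    by (simp add: regularization_def normalized_def lifted_truncation_def divide_right_mono)
  show "regularization M N P B K e x = 0" if "x \<notin> cube N B" for x
    using that by (simp add: regularization_def normalized_def lifted_truncation_def truncation_def)
qed

end

lemma regularization_L1_tendsto:
  assumes R: "\<And>k. cube_regularization M N P (B k) (K k) (e k)"
    and e: "(\<lambda>k. e k * (1 + measure (prodM M N) (cube N (B k)))) \<longlonglongrightarrow> 0"
    and trunc: "AE x in prodM M N. (\<lambda>k. truncation N P (B k) (K k) x) \<longlonglongrightarrow> P x"
  shows "(\<lambda>k. \<integral>\<^sup>+ x. ennreal \<bar>regularization M N P (B k) (K k) (e k) x - P x\<bar> \<partial>prodM M N) \<longlonglongrightarrow> 0"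
proof -
  interpret R0: cube_regularization M N P "B 0" "K 0" "e 0" by (rule R)
  define m where "m k = measure (prodM M N) (cube N (B k))" for k
  have e_pos: "0 < e k" for k
    using R cube_regularization.e by blast
  have e0: "e \<longlonglongrightarrow> 0" "(\<lambda>k. e k * m k) \<longlonglongrightarrow> 0"
    using e e_pos unfolding m_def
    by (auto intro!: tendsto_sandwich[OF _ _ tendsto_const e] always_eventually
        simp: algebra_simps less_imp_le)
  have truncation_integral:
    "(\<lambda>k. integral\<^sup>L (prodM M N) (truncation N P (B k) (K k))) \<longlonglongrightarrow> integral\<^sup>L (prodM M N) P"
  proof (rule integral_dominated_convergence[where w = P])
    show "truncation N P (B k) (K k) \<in> borel_measurable (prodM M N)" for k
      using R cube_regularization.B(1) by (intro measurable_truncation R0.measurable_density) blast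
    show "AE x in prodM M N. norm (truncation N P (B k) (K k) x) \<le> P x" for k
      using R0.density by (intro AE_I2) (auto simp: sym_prob_density_def truncation_nonneg truncation_le)
  qed (use R0.measurable_density integrable_sym_prob_density[OF R0.density] trunc in auto)
  have integral_tendsto:
    "(\<lambda>k. integral\<^sup>L (prodM M N) (lifted_truncation N P (B k) (K k) (e k))) \<longlonglongrightarrow> 1"
    using tendsto_add[OF truncation_integral e0(2)]
    by (simp add: cube_regularization.integral_lifted_truncation[OF R] m_def
        integral_sym_prob_density[OF R0.density])
  have lift_tendsto: "(\<lambda>k. e k * indicator (cube N (B k)) x) \<longlonglongrightarrow> 0" for x :: "nat \<Rightarrow> 'a"
    using e_pos by (intro Lim_null_comparison[OF _ e0(1)] always_eventually allI)
      (simp add: indicator_def less_imp_le)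
  have "AE x in prodM M N. (\<lambda>k. regularization M N P (B k) (K k) (e k) x) \<longlonglongrightarrow> P x"
    using trunc
  proof eventually_elim
    case (elim x)
    show ?case
      using tendsto_divide[OF tendsto_add[OF elim lift_tendsto] integral_tendsto]
      by (simp add: regularization_def normalized_def lifted_truncation_def)
  qed
  then show ?thesis
    using cube_regularization.sym_prob_density_regularization[OF R] R0.density
    by (rule sym_prob_density_L1_tendsto[rotated 2])
qed

lemma sigma_finite_exhausting_incseq:
  assumes "sigma_finite_measure M" "emeasure M (space M) \<noteq> 0"
  obtains B :: "nat \<Rightarrow> 'a set" where "range B \<subseteq> sets M" "incseq B" "(\<Union>k. B k) = space M"
    "\<And>k. 0 < emeasure M (B k)" "\<And>k. emeasure M (B k) < \<infinity>"
proof -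
  obtain A where A: "range A \<subseteq> sets M" "(\<Union>k. A k) = space M" "\<And>k. emeasure M (A k) \<noteq> \<infinity>"
    "incseq A"
    using sigma_finite_measure.sigma_finite_incseq[OF assms(1)] by metis
  have "\<exists>k0. 0 < emeasure M (A k0)"
  proof (rule ccontr)
    assume "\<nexists>k0. 0 < emeasure M (A k0)"
    then have "(\<Squnion>k. emeasure M (A k)) = 0"
      by simp
    then show False
      using SUP_emeasure_incseq[OF A(1,4)] A(2) assms(2) by simp
  qed
  then obtain k0 where k0: "0 < emeasure M (A k0)" ..
  have A_mono: "A j \<subseteq> A k" if "j \<le> k" for j k
    using A(4) that by (simp add: incseq_def)
  show ?thesis
  proof (rule that[of "\<lambda>k. A (k + k0)"])
    show "range (\<lambda>k. A (k + k0)) \<subseteq> sets M"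
      using A(1) by blast
    show "incseq (\<lambda>k. A (k + k0))"
      unfolding incseq_def by (intro allI impI A_mono) simp
    show "(\<Union>k. A (k + k0)) = space M"
    proof
      show "(\<Union>k. A (k + k0)) \<subseteq> space M"
        using A(2) by blast
      show "space M \<subseteq> (\<Union>k. A (k + k0))"
      proof
        fix x assume "x \<in> space M"
        then obtain j where "x \<in> A j"
          using A(2) by blast
        then have "x \<in> A (j + k0)"
          using A_mono[of j "j + k0"] by auto
        then show "x \<in> (\<Union>k. A (k + k0))"
          by blast
      qed
    qed
    show "0 < emeasure M (A (k + k0))" for k
      using k0 A(1) A_mono[of k0 "k + k0"] by (metis emeasure_mono order_less_le_trans le_add2 range_subsetD)
    show "emeasure M (A (k + k0)) < \<infinity>" for k
      by (metis A(3) infinity_ennreal_def less_top)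
  qed
qed

lemma lower_bounded_L1_approximation:
  assumes sf: "sigma_finite_measure M" and ne: "emeasure M (space M) \<noteq> 0" and "0 < N"
    and P: "sym_prob_density M N P"
  shows "\<exists>Ps :: nat \<Rightarrow> (nat \<Rightarrow> 'a) \<Rightarrow> real.
            (\<forall>n. sym_prob_density M N (Ps n) \<and> lower_bound_cond M N (Ps n)) \<and>
            (\<lambda>n. \<integral>\<^sup>+ x. ennreal \<bar>Ps n x - P x\<bar> \<partial>prodM M N) \<longlonglongrightarrow> 0"
proof -
  obtain B where B: "range B \<subseteq> sets M" "incseq B" "(\<Union>k. B k) = space M"
    "\<And>k. 0 < emeasure M (B k)" "\<And>k. emeasure M (B k) < \<infinity>"
    using sigma_finite_exhausting_incseq[OF sf ne] by metis
  define m where "m k = measure (prodM M N) (cube N (B k))" for k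
  define e where "e k = inverse (real (Suc k) * (1 + m k))" for k
  have m: "0 \<le> m k" for k
    by (simp add: m_def)
  have R: "cube_regularization M N P (B k) (real k) (e k)" for k
  proof (rule cube_regularization.intro)
    show "B k \<in> sets M"
      using B(1) by blast
    show "0 < e k"
      using m[of k] by (simp add: e_def)
  qed (use sf P B(4,5) in auto)
  have "e k * (1 + m k) = inverse (real (Suc k))" for k
    using m[of k] by (simp add: e_def)
  then have e0: "(\<lambda>k. e k * (1 + m k)) \<longlonglongrightarrow> 0"
    using LIMSEQ_inverse_real_of_nat by simp
  have trunc: "AE x in prodM M N. (\<lambda>k. truncation N P (B k) (real k) x) \<longlonglongrightarrow> P x"
  proof (rule AE_I2)
    fix x assume x: "x \<in> space (prodM M N)"
    then have "max 0 (P x) = P x"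
      using P by (simp add: sym_prob_density_def)
    then show "(\<lambda>k. truncation N P (B k) (real k) x) \<longlonglongrightarrow> P x"
      using truncation_tendsto[where P = P, OF B(2,3) filterlim_real_sequentially x] by simp
  qed
  show ?thesis
  proof (intro exI[of _ "\<lambda>k. regularization M N P (B k) (real k) (e k)"] conjI allI)
    show "sym_prob_density M N (regularization M N P (B k) (real k) (e k))" for k
      by (rule cube_regularization.sym_prob_density_regularization[OF R])
    show "lower_bound_cond M N (regularization M N P (B k) (real k) (e k))" for k
      by (rule cube_regularization.lower_bound_cond_regularization[OF R \<open>0 < N\<close>])
  qed (rule regularization_L1_tendsto[OF R e0[unfolded m_def] trunc])
qed


lemma AE_le_real_of_esssup:
  assumes "esssup M (\<lambda>x. ereal (f x)) < \<infinity>"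
  shows "AE x in M. f x \<le> real_of_ereal (esssup M (\<lambda>x. ereal (f x)))"
  using esssup_AE[of "\<lambda>x. ereal (f x)" M]
proof eventually_elim
  case (elim x)
  then show ?case
    using assms by (cases "esssup M (\<lambda>x. ereal (f x))") auto
qed

lemma esssup_abs_tendsto_zero:
  fixes f :: "nat \<Rightarrow> 'b \<Rightarrow> real"
  assumes "emeasure M (space M) \<noteq> 0" and f: "\<And>k. f k \<in> borel_measurable M"
    and "\<And>k. AE x in M. \<bar>f k x\<bar> \<le> c k" and "c \<longlonglongrightarrow> 0"
  shows "(\<lambda>k. esssup M (\<lambda>x. ereal \<bar>f k x\<bar>)) \<longlonglongrightarrow> 0"
proof (rule tendsto_sandwich[where f = "\<lambda>_. 0" and h = "\<lambda>k. ereal (c k)"])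
  note f[measurable]
  have "esssup M (\<lambda>x. 0) \<le> esssup M (\<lambda>x. ereal \<bar>f k x\<bar>)" for k
    by (rule esssup_mono) auto
  then show "\<forall>\<^sub>F k in sequentially. 0 \<le> esssup M (\<lambda>x. ereal \<bar>f k x\<bar>)"
    by (simp add: esssup_const[OF assms(1)])
  have "esssup M (\<lambda>x. ereal \<bar>f k x\<bar>) \<le> ereal (c k)" for k
    using assms(3)[of k] by (intro esssup_I) (auto elim!: eventually_mono)
  then show "\<forall>\<^sub>F k in sequentially. esssup M (\<lambda>x. ereal \<bar>f k x\<bar>) \<le> ereal (c k)"
    by simp
  show "(\<lambda>k. ereal (c k)) \<longlonglongrightarrow> 0"
    using tendsto_ereal[OF assms(4)] by (simp add: zero_ereal_def)
qed simp

lemma abs_shift_divide_diff_le: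
  fixes p K e m :: real
  assumes "0 \<le> p" "p \<le> K" "0 < e" "0 \<le> m"
  shows "\<bar>(p + e) / (1 + e * m) - p\<bar> \<le> e * (1 + m * K)"
proof -
  have "1 \<le> 1 + e * m"
    using assms by simp
  have "\<bar>1 - m * p\<bar> \<le> 1 + m * K"
    using mult_left_mono[OF assms(2,4)] mult_nonneg_nonneg[OF assms(4,1)] by (simp add: abs_le_iff)
  then have "\<bar>e * (1 - m * p)\<bar> \<le> e * (1 + m * K)"
    using assms(3) by (simp add: abs_mult)
  moreover have "(p + e) / (1 + e * m) - p = e * (1 - m * p) / (1 + e * m)"
    using \<open>1 \<le> 1 + e * m\<close> by (simp add: field_simps)
  moreover have "\<bar>e * (1 - m * p) / (1 + e * m)\<bar> \<le> \<bar>e * (1 - m * p)\<bar>"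
    using \<open>1 \<le> 1 + e * m\<close> by (simp add: divide_le_eq mult_le_cancel_left1)
  ultimately show ?thesis
    by simp
qed

lemma AE_truncation_space_eq:
  assumes P: "sym_prob_density M N P" and "AE x in prodM M N. P x \<le> K"
  shows "AE x in prodM M N. truncation N P (space M) K x = P x"
  using assms(2) AE_space
proof eventually_elim
  case (elim x)
  then show ?case
    using P by (simp add: truncation_def space_prodM sym_prob_density_def)
qed

lemma AE_regularization_space_error:
  assumes R: "cube_regularization M N P (space M) K e" and P_le: "AE x in prodM M N. P x \<le> K"
  shows "AE x in prodM M N. \<bar>regularization M N P (space M) K e x - P x\<bar>
           \<le> e * (1 + measure (prodM M N) (space (prodM M N)) * K)"
proof -
  interpret cube_regularization M N P "space M" K e by (rule R)
  note trunc = AE_truncation_space_eq[OF density P_le]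
  have "integral\<^sup>L (prodM M N) (truncation N P (space M) K) = 1"
    using integral_cong_AE[OF measurable_truncation[OF measurable_density B(1)] measurable_density trunc]
      integral_sym_prob_density[OF density]
    by simp
  then have integral: "integral\<^sup>L (prodM M N) (lifted_truncation N P (space M) K e)
      = 1 + e * measure (prodM M N) (space (prodM M N))"
    by (simp add: integral_lifted_truncation space_prodM)
  from trunc P_le AE_space show ?thesis
  proof eventually_elim
    case (elim x)
    moreover have "0 \<le> P x"
      using density elim by (simp add: sym_prob_density_def)
    ultimately show ?case
      using e K by (simp add: regularization_def normalized_def lifted_truncation_def integral
          space_prodM abs_shift_divide_diff_le)
  qed
qed

lemma lower_bounded_Linfty_approximation:
  assumes sf: "sigma_finite_measure M" and ne: "emeasure M (space M) \<noteq> 0" and "0 < N"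
    and P: "sym_prob_density M N P" and fin: "emeasure M (space M) < \<infinity>"
    and bounded: "esssup (prodM M N) (\<lambda>x. ereal \<bar>P x\<bar>) < \<infinity>"
  shows "\<exists>Ps :: nat \<Rightarrow> (nat \<Rightarrow> 'a) \<Rightarrow> real.
            (\<forall>n. sym_prob_density M N (Ps n) \<and> lower_bound_cond M N (Ps n)) \<and>
            (\<lambda>n. \<integral>\<^sup>+ x. ennreal \<bar>Ps n x - P x\<bar> \<partial>prodM M N) \<longlonglongrightarrow> 0 \<and>
            (\<lambda>n. esssup (prodM M N) (\<lambda>x. ereal \<bar>Ps n x - P x\<bar>)) \<longlonglongrightarrow> 0"
proof -
  define K where "K = max 0 (real_of_ereal (esssup (prodM M N) (\<lambda>x. ereal \<bar>P x\<bar>)))"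
  define e where "e k = inverse (real (Suc k))" for k
  have P_le: "AE x in prodM M N. P x \<le> K"
    using AE_le_real_of_esssup[OF bounded] by eventually_elim (simp add: K_def)
  have R: "cube_regularization M N P (space M) K (e k)" for k
  proof (rule cube_regularization.intro)
    show "0 < emeasure M (space M)"
      using ne by (simp add: zero_less_iff_neq_zero)
  qed (use sf P fin in \<open>auto simp: K_def e_def\<close>)
  have e0: "(\<lambda>k. e k * c) \<longlonglongrightarrow> 0" for c
    unfolding e_def by (rule tendsto_mult_left_zero[OF LIMSEQ_inverse_real_of_nat])
  have space_nonzero: "emeasure (prodM M N) (space (prodM M N)) \<noteq> 0"
    using ne by (simp add: space_prodM emeasure_cube[OF sf])
  show ?thesis
  proof (intro exI[of _ "\<lambda>k. regularization M N P (space M) K (e k)"] conjI allI)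
    show "sym_prob_density M N (regularization M N P (space M) K (e k))" for k
      by (rule cube_regularization.sym_prob_density_regularization[OF R])
    show "lower_bound_cond M N (regularization M N P (space M) K (e k))" for k
      by (rule cube_regularization.lower_bound_cond_regularization[OF R \<open>0 < N\<close>])
    show "(\<lambda>k. \<integral>\<^sup>+ x. ennreal \<bar>regularization M N P (space M) K (e k) x - P x\<bar> \<partial>prodM M N) \<longlonglongrightarrow> 0"
      using AE_truncation_space_eq[OF P P_le]
      by (intro regularization_L1_tendsto[OF R]) (auto simp: e0 space_prodM elim: AE_mp)
    show "(\<lambda>k. esssup (prodM M N) (\<lambda>x. ereal \<bar>regularization M N P (space M) K (e k) x - P x\<bar>))
        \<longlonglongrightarrow> 0"
      using cube_regularization.sym_prob_density_regularization[OF R] P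
      by (intro esssup_abs_tendsto_zero[OF space_nonzero _ AE_regularization_space_error[OF R P_le] e0]
          borel_measurable_diff)
        (auto simp: sym_prob_density_def)
  qed
qed

theorem theorem4:
  fixes M :: "'a measure" and N :: nat and P :: "(nat \<Rightarrow> 'a) \<Rightarrow> real"
  assumes "complete_measure M" and "sigma_finite_measure M"
    and "emeasure M (space M) \<noteq> 0"
    and "N \<ge> 2"
    and "sym_prob_density M N P"
  shows "(\<exists>Ps :: nat \<Rightarrow> (nat \<Rightarrow> 'a) \<Rightarrow> real.
            (\<forall>n. sym_prob_density M N (Ps n) \<and> lower_bound_cond M N (Ps n)) \<and>
            (\<lambda>n. \<integral>\<^sup>+ x. ennreal \<bar>Ps n x - P x\<bar> \<partial>prodM M N) \<longlonglongrightarrow> 0)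
       \<and> (emeasure M (space M) < \<infinity> \<and> esssup (prodM M N) (\<lambda>x. ereal \<bar>P x\<bar>) < \<infinity> \<longrightarrow>
          (\<exists>Ps :: nat \<Rightarrow> (nat \<Rightarrow> 'a) \<Rightarrow> real.
            (\<forall>n. sym_prob_density M N (Ps n) \<and> lower_bound_cond M N (Ps n)) \<and>
            (\<lambda>n. \<integral>\<^sup>+ x. ennreal \<bar>Ps n x - P x\<bar> \<partial>prodM M N) \<longlonglongrightarrow> 0 \<and>
            (\<lambda>n. esssup (prodM M N) (\<lambda>x. ereal \<bar>Ps n x - P x\<bar>)) \<longlonglongrightarrow> 0))"
proof -
  have "0 < N"
    using \<open>N \<ge> 2\<close> by simp
  then show ?thesis
    using lower_bounded_L1_approximation[OF assms(2,3) _ assms(5)]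
      lower_bounded_Linfty_approximation[OF assms(2,3) _ assms(5)]
    by blast
qed

end
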